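(* Let $r\ge1$, let $H$ be a multi-hypergraph in which every hyperedge has size at most $r$, let $\mathcal{M}$ be a matroid and $\gamma\colon E(H)\to E(\mathcal{M})$. If $(H,\gamma)$ contains a maximal independent matching of size $\ell\ge 0$, then there exist an integer $a$ with $0\le a\le \ell$ and a set $U\subseteq V(H)$ with $|U|\le (2r-1)a$ such that $H-U$ contains an independent matching of size $\ell-a$ whose labels form a basis of $\mathrm{span}(\gamma(E(H-U)))$.
   Context: A multi-hypergraph $H=(V,E)$ consists of a finite set $V$ and a multiset $E$ of non-empty subsets of $V$; distinct copies of the same subset are distinct hyperedges and may receive different labels. For $U\subseteq V(H)$, $H-U$ has vertex set $V(H)\setminus U$ and all hyperedges disjoint from $U$. $\mathrm{span}$ denotes the closure operator of $\mathcal{M}$; a basis of a flat $S$ is a maximal independent subset of $S$. An independent matching in $(H,\gamma)$ is a collection $M$ of pairwise vertex-disjoint hyperedges with pairwise distinct labels such that $\gamma(M)$ is independent in $\mathcal{M}$ (the empty collection qualifies). It is inclusion-wise maximal if no independent matching strictly contains it, and maximal if there is no independent matching $M'$ with $\mathrm{span}(\gamma(M'))=\mathrm{span}(\gamma(M))$ that is not inclusion-wise maximal. *)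

theory Defs
  imports Main
begin

definition matroid :: "'m set \<Rightarrow> ('m set \<Rightarrow> bool) \<Rightarrow> bool" where
  "matroid Gr indep \<longleftrightarrow> finite Gr \<and> indep {} \<and>
     (\<forall>X. indep X \<longrightarrow> X \<subseteq> Gr) \<and>
     (\<forall>X Y. indep Y \<and> X \<subseteq> Y \<longrightarrow> indep X) \<and>
     (\<forall>X Y. indep X \<and> indep Y \<and> card X < card Y \<longrightarrow> (\<exists>y\<in>Y - X. indep (insert y X)))"

definition mspan :: "'m set \<Rightarrow> ('m set \<Rightarrow> bool) \<Rightarrow> 'm set \<Rightarrow> 'm set" where
  "mspan Gr indep X = {x \<in> Gr. x \<in> X \<or> (\<exists>I\<subseteq>X. indep I \<and> \<not> indep (insert x I))}"

definition basis_of :: "('m set \<Rightarrow> bool) \<Rightarrow> 'm set \<Rightarrow> 'm set \<Rightarrow> bool" where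
  "basis_of indep S B \<longleftrightarrow> B \<subseteq> S \<and> indep B \<and> (\<forall>x\<in>S - B. \<not> indep (insert x B))"

text \<open>Multi-hypergraph: vertex set V, hyperedge index set E, incidence inc e \<subseteq> V.\<close>
definition multi_hypergraph :: "'v set \<Rightarrow> 'e set \<Rightarrow> ('e \<Rightarrow> 'v set) \<Rightarrow> bool" where
  "multi_hypergraph V E inc \<longleftrightarrow> finite V \<and> finite E \<and>
     (\<forall>e\<in>E. inc e \<noteq> {} \<and> inc e \<subseteq> V)"

definition edges_minus :: "'e set \<Rightarrow> ('e \<Rightarrow> 'v set) \<Rightarrow> 'v set \<Rightarrow> 'e set" where
  "edges_minus E inc U = {e \<in> E. inc e \<inter> U = {}}"

definition indep_matching ::
  "('m set \<Rightarrow> bool) \<Rightarrow> 'e set \<Rightarrow> ('e \<Rightarrow> 'v set) \<Rightarrow> ('e \<Rightarrow> 'm) \<Rightarrow> 'e set \<Rightarrow> bool" where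
  "indep_matching indep E inc \<gamma> M \<longleftrightarrow> M \<subseteq> E \<and>
     (\<forall>e\<in>M. \<forall>f\<in>M. e \<noteq> f \<longrightarrow> inc e \<inter> inc f = {}) \<and>
     inj_on \<gamma> M \<and> indep (\<gamma> ` M)"

definition incl_max_indep_matching ::
  "('m set \<Rightarrow> bool) \<Rightarrow> 'e set \<Rightarrow> ('e \<Rightarrow> 'v set) \<Rightarrow> ('e \<Rightarrow> 'm) \<Rightarrow> 'e set \<Rightarrow> bool" where
  "incl_max_indep_matching indep E inc \<gamma> M \<longleftrightarrow> indep_matching indep E inc \<gamma> M \<and>
     (\<forall>M'. indep_matching indep E inc \<gamma> M' \<and> M \<subseteq> M' \<longrightarrow> M' = M)"

definition max_indep_matching ::
  "'m set \<Rightarrow> ('m set \<Rightarrow> bool) \<Rightarrow> 'e set \<Rightarrow> ('e \<Rightarrow> 'v set) \<Rightarrow> ('e \<Rightarrow> 'm) \<Rightarrow> 'e set \<Rightarrow> bool" where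
  "max_indep_matching Gr indep E inc \<gamma> M \<longleftrightarrow> indep_matching indep E inc \<gamma> M \<and>
     (\<forall>M'. indep_matching indep E inc \<gamma> M' \<and>
           mspan Gr indep (\<gamma> ` M') = mspan Gr indep (\<gamma> ` M) \<longrightarrow>
           incl_max_indep_matching indep E inc \<gamma> M')"

end

theory Submission
  imports Defs
begin

text \<open>Induction on \<open>\<ell>\<close>. If every label is spanned by \<open>\<gamma>(M)\<close>, then \<open>M\<close> itself works
  with \<open>U = {}\<close>. Otherwise fix an edge \<open>e\<close> with unspanned label and, among the independent
  matchings \<open>N\<close> with the same span as \<open>M\<close>, choose one for which the set \<open>F\<close> of edges of \<open>N\<close>
  meeting \<open>e\<close> is smallest; \<open>F\<close> is nonempty by maximality. Deleting the at most
  \<open>r + |F|(r - 1) \<le> (2r - 1)|F|\<close> vertices of \<open>e\<close> and \<open>F\<close> leaves \<open>N - F\<close> as a maximal independent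
  matching, so induction applies. Indeed, suppose a matching \<open>N\<^sub>2\<close> of the smaller hypergraph with
  the span of \<open>N - F\<close> could be extended by an edge \<open>g\<close>. Exchanging \<open>N - F\<close> for \<open>N\<^sub>2\<close> inside \<open>N\<close>
  gives a matching \<open>S = N\<^sub>2 \<union> F\<close> with the span of \<open>M\<close>. If \<open>\<gamma>(g)\<close> is not spanned by \<open>\<gamma>(S)\<close>,
  then \<open>S + g\<close> contradicts maximality; otherwise completing \<open>\<gamma>(N\<^sub>2 + g)\<close> to a basis of that span
  by labels of \<open>F\<close> uses fewer than \<open>|F|\<close> of them, and yields a matching with the same span that
  meets \<open>e\<close> in fewer edges than \<open>N\<close>.\<close>

locale fin_matroid =
  fixes Gr :: "'m set" and indep :: "'m set \<Rightarrow> bool"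
  assumes matroid: "matroid Gr indep"
begin

abbreviation span :: "'m set \<Rightarrow> 'm set" where
  "span \<equiv> mspan Gr indep"

lemma finite_ground: "finite Gr"
  and indep_empty: "indep {}"
  and indep_subset_ground: "indep X \<Longrightarrow> X \<subseteq> Gr"
  and indep_subset: "indep Y \<Longrightarrow> X \<subseteq> Y \<Longrightarrow> indep X"
  and indep_augment: "indep X \<Longrightarrow> indep Y \<Longrightarrow> card X < card Y \<Longrightarrow> \<exists>y\<in>Y - X. indep (insert y X)"
  using matroid unfolding matroid_def by blast+

lemma indep_finite: "indep X \<Longrightarrow> finite X"
  using finite_ground indep_subset_ground finite_subset by blast

lemma insert_indep_iff_notin_span:
  assumes "indep I" "x \<in> Gr" "x \<notin> I"
  shows "indep (insert x I) \<longleftrightarrow> x \<notin> span I"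
  using assms indep_subset[of "insert x I"] unfolding mspan_def by blast

lemma span_mono: "X \<subseteq> Y \<Longrightarrow> span X \<subseteq> span Y"
  unfolding mspan_def by auto

lemma span_subset_ground: "span X \<subseteq> Gr"
  unfolding mspan_def by auto

lemma subset_span: "X \<subseteq> Gr \<Longrightarrow> X \<subseteq> span X"
  unfolding mspan_def by auto

lemma basis_spans: "basis_of indep X K \<Longrightarrow> X \<subseteq> Gr \<Longrightarrow> X \<subseteq> span K"
  unfolding basis_of_def mspan_def by blast

lemma basis_exists:
  assumes "A \<subseteq> X" "X \<subseteq> Gr" "indep A"
  shows "\<exists>K. A \<subseteq> K \<and> basis_of indep X K"
proof -
  let ?P = "\<lambda>K. A \<subseteq> K \<and> K \<subseteq> X \<and> indep K"
  have bounded: "\<forall>K. ?P K \<longrightarrow> card K < card Gr + 1"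
  proof (intro allI impI)
    fix K assume "?P K"
    then have "card K \<le> card Gr" using assms(2) finite_ground by (intro card_mono) auto
    then show "card K < card Gr + 1" by simp
  qed
  then obtain K where K: "?P K" and greatest: "\<forall>L. ?P L \<longrightarrow> card L \<le> card K"
    using ex_has_greatest_nat[of ?P A card, OF _ bounded] assms(1,3) by auto
  have "\<not> indep (insert y K)" if y: "y \<in> X - K" for y
  proof
    assume "indep (insert y K)"
    with K y have "?P (insert y K)" by blast
    then have "card (insert y K) \<le> card K" using greatest by blast
    with y K indep_finite show False by simp
  qed
  with K show ?thesis unfolding basis_of_def by blast
qed

lemma basis_card_ge:
  assumes "basis_of indep X K" "L \<subseteq> X" "indep L"
  shows "card L \<le> card K"
proof (rule ccontr)
  assume "\<not> card L \<le> card K"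
  then obtain y where "y \<in> L - K" "indep (insert y K)"
    using indep_augment[of K L] assms unfolding basis_of_def by force
  with assms show False unfolding basis_of_def by blast
qed

lemma basis_of_span_self:
  assumes I: "indep I"
  shows "basis_of indep (span I) I"
proof -
  have "I \<subseteq> span I" using subset_span[OF indep_subset_ground[OF I]] .
  moreover have "\<not> indep (insert x I)" if "x \<in> span I - I" for x
    using that insert_indep_iff_notin_span[OF I] span_subset_ground by blast
  ultimately show ?thesis using I unfolding basis_of_def by blast
qed

lemma card_eq_if_span_eq:
  assumes "indep A" "indep B" "span A = span B"
  shows "card A = card B"
proof -
  have "card B \<le> card A" if "indep A" "indep B" "span A = span B" for A B
    using basis_card_ge[OF basis_of_span_self[OF \<open>indep A\<close>]]
      subset_span[OF indep_subset_ground[OF \<open>indep B\<close>]] that by simp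
  with assms show ?thesis by (metis le_antisym)
qed

lemma span_basis:
  assumes K: "basis_of indep X K" and X: "X \<subseteq> Gr"
  shows "span K = span X"
proof
  show "span K \<subseteq> span X" using K span_mono unfolding basis_of_def by blast
  show "span X \<subseteq> span K"
  proof
    fix y assume y: "y \<in> span X"
    show "y \<in> span K"
    proof (cases "y \<in> X")
      case True with basis_spans[OF K X] show ?thesis by blast
    next
      case False
      then obtain J where J: "J \<subseteq> X" "indep J" "\<not> indep (insert y J)"
        using y unfolding mspan_def by blast
      show ?thesis
      proof (rule ccontr)
        assume "y \<notin> span K"
        moreover have yK: "y \<notin> K" "indep K" "y \<in> Gr"
          using False K y span_subset_ground unfolding basis_of_def by blast+
        ultimately have indep_yK: "indep (insert y K)"
          using insert_indep_iff_notin_span by blast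
        obtain K' where K': "J \<subseteq> K'" "basis_of indep X K'"
          using basis_exists[OF J(1) X J(2)] by blast
        have "card K' < card (insert y K)"
          using basis_card_ge[OF K, of K'] K'(2) yK indep_finite
          unfolding basis_of_def by simp
        then obtain z where z: "z \<in> insert y K - K'" "indep (insert z K')"
          using indep_augment[OF _ indep_yK] K'(2) unfolding basis_of_def by blast
        show False
        proof (cases "z = y")
          case True
          then show False using z K'(1) J(3) indep_subset[of "insert y K'" "insert y J"] by blast
        next
          case False
          then show False using z K K' unfolding basis_of_def by blast
        qed
      qed
    qed
  qed
qed

lemma span_subset_span:
  assumes Y: "Y \<subseteq> Gr" and XY: "X \<subseteq> span Y"
  shows "span X \<subseteq> span Y"
proof
  obtain K where K: "basis_of indep Y K"
    using basis_exists[OF empty_subsetI Y indep_empty] by blast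
  have spY: "span Y = span K" using span_basis[OF K Y] by simp
  have indK: "indep K" using K unfolding basis_of_def by blast
  fix x assume x: "x \<in> span X"
  show "x \<in> span Y"
  proof (cases "x \<in> X")
    case True with XY show ?thesis by blast
  next
    case False
    then obtain J where J: "J \<subseteq> X" "indep J" "\<not> indep (insert x J)"
      using x unfolding mspan_def by blast
    have J_span: "J \<subseteq> span K" using J(1) XY spY by blast
    show ?thesis
    proof (rule ccontr)
      assume "x \<notin> span Y"
      moreover have "x \<notin> K" "x \<in> Gr"
        using \<open>x \<notin> span Y\<close> x subset_span[OF indep_subset_ground[OF indK]] spY span_subset_ground
        by blast+
      ultimately have indep_xK: "indep (insert x K)"
        using insert_indep_iff_notin_span[OF indK] spY by blast
      have JK_ground: "J \<union> K \<subseteq> Gr" using J(2) indK indep_subset_ground by blast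
      have K_basis: "basis_of indep (J \<union> K) K"
        unfolding basis_of_def
        using indK J_span insert_indep_iff_notin_span[OF indK] JK_ground by blast
      obtain K2 where K2: "J \<subseteq> K2" "basis_of indep (J \<union> K) K2"
        using basis_exists[OF _ JK_ground J(2)] by blast
      have "card K2 < card (insert x K)"
        using basis_card_ge[OF K_basis, of K2] K2(2) \<open>x \<notin> K\<close> indep_finite[OF indK]
        unfolding basis_of_def by simp
      then obtain z where z: "z \<in> insert x K - K2" "indep (insert z K2)"
        using indep_augment[OF _ indep_xK] K2(2) unfolding basis_of_def by blast
      show False
      proof (cases "z = x")
        case True
        then show False using z K2(1) J(3) indep_subset[of "insert x K2" "insert x J"] by blast
      next
        case False
        then show False using z K2(2) unfolding basis_of_def by blast
      qed
    qed
  qed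
qed

lemma span_eq_if_subset:
  assumes "Y \<subseteq> X" "X \<subseteq> span Y" "X \<subseteq> Gr"
  shows "span X = span Y"
  using assms span_subset_span[of Y X] span_mono[of Y X] by blast

lemma span_Un_cong:
  assumes "A \<subseteq> Gr" "B \<subseteq> Gr" "C \<subseteq> Gr" "span A = span B"
  shows "span (A \<union> C) = span (B \<union> C)"
proof -
  have "span (A \<union> C) \<subseteq> span (B \<union> C)"
    if "A \<subseteq> Gr" "B \<subseteq> Gr" "C \<subseteq> Gr" "span A = span B" for A B
  proof (rule span_subset_span)
    show "B \<union> C \<subseteq> Gr" using that by blast
    have "A \<subseteq> span B" using that subset_span by blast
    also have "\<dots> \<subseteq> span (B \<union> C)" by (rule span_mono) blast
    finally show "A \<union> C \<subseteq> span (B \<union> C)"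
      using subset_span[of "B \<union> C"] that by blast
  qed
  with assms show ?thesis by (metis subset_antisym)
qed

lemma basis_of_span_of_spanning:
  assumes "indep I" "I \<subseteq> S" "S \<subseteq> span I" "S \<subseteq> Gr"
  shows "basis_of indep (span S) I"
  using basis_of_span_self[OF assms(1)] span_eq_if_subset[OF assms(2-4)] by simp

lemma indep_Un_exchange:
  assumes A: "indep A" and B: "indep B" and eq: "span A = span B"
    and AC: "indep (A \<union> C)" and disj: "A \<inter> C = {}"
  shows "indep (B \<union> C)" "B \<inter> C = {}"
proof -
  have C_ground: "C \<subseteq> Gr" using indep_subset_ground[OF AC] by blast
  have A_span: "A \<subseteq> span B" and B_span: "B \<subseteq> span A"
    using eq subset_span indep_subset_ground A B by blast+
  show BC_disj: "B \<inter> C = {}"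
  proof (rule ccontr)
    assume "B \<inter> C \<noteq> {}"
    then obtain c where c: "c \<in> B" "c \<in> C" by blast
    then have "\<not> indep (insert c A)"
      using disj B_span C_ground insert_indep_iff_notin_span[OF A] by blast
    moreover have "insert c A \<subseteq> A \<union> C" using c by blast
    ultimately show False using indep_subset[OF AC] by blast
  qed
  have BC_ground: "B \<union> C \<subseteq> Gr" using C_ground indep_subset_ground[OF B] by blast
  obtain K where K: "B \<subseteq> K" "basis_of indep (B \<union> C) K"
    using basis_exists[of B "B \<union> C"] BC_ground B by blast
  have "K = B \<union> C"
  proof (rule ccontr)
    assume "K \<noteq> B \<union> C"
    then have "K \<subset> B \<union> C" using K(2) unfolding basis_of_def by blast
    moreover have fin: "finite (B \<union> C)" using BC_ground finite_ground finite_subset by blast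
    ultimately have "card K < card (B \<union> C)" by (simp add: psubset_card_mono)
    also have "\<dots> = card B + card C" using BC_disj fin by (simp add: card_Un_disjoint)
    also have "\<dots> = card (A \<union> C)"
      using card_eq_if_span_eq[OF A B eq] disj indep_finite[OF AC] by (simp add: card_Un_disjoint)
    finally obtain z where z: "z \<in> A \<union> C - K" "indep (insert z K)"
      using indep_augment[OF _ AC] K(2) unfolding basis_of_def by blast
    show False
    proof (cases "z \<in> C")
      case True then show False using z K(2) unfolding basis_of_def by blast
    next
      case False
      then have "z \<in> A" "z \<notin> B" using z K(1) by blast+
      then have "\<not> indep (insert z B)"
        using A_span insert_indep_iff_notin_span[OF B] indep_subset_ground[OF A] by blast
      then show False using z K(1) indep_subset[of "insert z K" "insert z B"] by blast
    qed
  qed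
  then show "indep (B \<union> C)" using K(2) unfolding basis_of_def by blast
qed

lemma indep_Un_exchange_superset:
  assumes AC: "indep (A \<union> C)" and disj: "A \<inter> C = {}"
    and AB: "A \<subseteq> B" and B: "indep B" and B_span: "B \<subseteq> span (A \<union> C)"
    and less: "card A < card B"
  shows "\<exists>C'\<subseteq>C. B \<inter> C' = {} \<and> indep (B \<union> C') \<and> span (B \<union> C') = span (A \<union> C)
           \<and> card C' < card C"
proof -
  define X where "X = B \<union> C"
  have X_ground: "X \<subseteq> Gr"
    unfolding X_def using B_span span_subset_ground indep_subset_ground[OF AC] by blast
  obtain K where K: "B \<subseteq> K" "basis_of indep X K"
    using basis_exists[of B X] X_ground B unfolding X_def by blast
  define C' where "C' = K - B"
  have K_eq: "K = B \<union> C'" and C'C: "C' \<subseteq> C"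
    using K unfolding C'_def X_def basis_of_def by blast+
  have "span K = span X" by (rule span_basis[OF K(2) X_ground])
  also have "\<dots> = span (A \<union> C)"
    using AB B_span subset_span[OF indep_subset_ground[OF AC]] X_ground
    by (intro span_eq_if_subset) (auto simp: X_def)
  finally have span_K: "span K = span (A \<union> C)" .
  have indK: "indep K" using K(2) unfolding basis_of_def by blast
  have fin: "finite B" "finite C'" "finite A" "finite C"
    using indep_finite[OF indK] indep_finite[OF AC] K_eq by auto
  have "card B + card C' = card K"
    unfolding K_eq using fin by (subst card_Un_disjoint) (auto simp: C'_def)
  also have "\<dots> = card (A \<union> C)"
    using card_eq_if_span_eq[OF indK AC span_K] .
  also have "\<dots> = card A + card C" using disj fin by (simp add: card_Un_disjoint)
  finally have "card C' < card C" using less by linarith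
  moreover have "B \<inter> C' = {}" unfolding C'_def by blast
  ultimately show ?thesis using C'C K_eq indK span_K by metis
qed

lemma indep_matching_Un:
  assumes A: "indep_matching indep E inc \<gamma> A" and B: "indep_matching indep E inc \<gamma> B"
    and disj: "\<And>a b. a \<in> A \<Longrightarrow> b \<in> B \<Longrightarrow> inc a \<inter> inc b = {}"
    and labels_disj: "\<gamma> ` A \<inter> \<gamma> ` B = {}" and indep_AB: "indep (\<gamma> ` A \<union> \<gamma> ` B)"
  shows "indep_matching indep E inc \<gamma> (A \<union> B)"
proof -
  from A have AE: "A \<subseteq> E" and pA: "\<forall>x\<in>A. \<forall>y\<in>A. x \<noteq> y \<longrightarrow> inc x \<inter> inc y = {}"
    and iA: "inj_on \<gamma> A" unfolding indep_matching_def by auto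
  from B have BE: "B \<subseteq> E" and pB: "\<forall>x\<in>B. \<forall>y\<in>B. x \<noteq> y \<longrightarrow> inc x \<inter> inc y = {}"
    and iB: "inj_on \<gamma> B" unfolding indep_matching_def by auto
  have "inc x \<inter> inc y = {}" if "x \<in> A \<union> B" "y \<in> A \<union> B" "x \<noteq> y" for x y
    using that pA pB disj[of x y] disj[of y x] by blast
  moreover have "inj_on \<gamma> (A \<union> B)"
    using iA iB labels_disj unfolding inj_on_Un by blast
  ultimately show ?thesis
    using AE BE indep_AB unfolding indep_matching_def by (simp add: image_Un)
qed

lemma indep_matching_subset:
  assumes "indep_matching indep E inc \<gamma> N" "M \<subseteq> N" "M \<subseteq> E'"
  shows "indep_matching indep E' inc \<gamma> M"
  using assms indep_subset[of "\<gamma> ` N" "\<gamma> ` M"] inj_on_subset[of \<gamma> N M]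
  unfolding indep_matching_def by blast

lemma indep_matching_insert:
  assumes N: "indep_matching indep E inc \<gamma> N" and e: "e \<in> E" "\<gamma> e \<in> Gr" "\<gamma> e \<notin> span (\<gamma> ` N)"
    and disj: "\<forall>f\<in>N. inc f \<inter> inc e = {}"
  shows "indep_matching indep E inc \<gamma> (insert e N)"
proof -
  have indN: "indep (\<gamma> ` N)" using N unfolding indep_matching_def by blast
  have e_new: "\<gamma> e \<notin> \<gamma> ` N" using e(3) subset_span[OF indep_subset_ground[OF indN]] by blast
  then have indeN: "indep (\<gamma> ` N \<union> \<gamma> ` {e})"
    using insert_indep_iff_notin_span[OF indN e(2)] e(3) by simp
  have "indep_matching indep E inc \<gamma> {e}"
    using e(1) indep_subset[OF indeN] unfolding indep_matching_def by auto
  from indep_matching_Un[OF N this _ _ indeN] show ?thesis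
    using disj e_new by auto
qed

lemma indep_matching_card_eq:
  assumes "indep_matching indep E inc \<gamma> A" "indep_matching indep E' inc \<gamma> B"
    and "span (\<gamma> ` A) = span (\<gamma> ` B)"
  shows "card A = card B"
  using assms card_eq_if_span_eq card_image unfolding indep_matching_def by metis

lemma max_indep_matching_if_span_eq:
  "max_indep_matching Gr indep E inc \<gamma> M \<Longrightarrow> indep_matching indep E inc \<gamma> N \<Longrightarrow>
   span (\<gamma> ` N) = span (\<gamma> ` M) \<Longrightarrow> max_indep_matching Gr indep E inc \<gamma> N"
  unfolding max_indep_matching_def by simp

lemma max_indep_matching_spans_free_edge:
  assumes max: "max_indep_matching Gr indep E inc \<gamma> M"
    and S: "indep_matching indep E inc \<gamma> S" "span (\<gamma> ` S) = span (\<gamma> ` M)"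
    and g: "g \<in> E" "\<gamma> g \<in> Gr" and disj: "\<forall>f\<in>S. inc f \<inter> inc g = {}"
  shows "\<gamma> g \<in> span (\<gamma> ` S)"
proof (rule ccontr)
  assume free: "\<gamma> g \<notin> span (\<gamma> ` S)"
  then have "g \<notin> S" using subset_span S(1) indep_subset_ground unfolding indep_matching_def by blast
  moreover have "indep_matching indep E inc \<gamma> (insert g S)"
    using indep_matching_insert[OF S(1) g free disj] .
  ultimately show False
    using max S unfolding max_indep_matching_def incl_max_indep_matching_def by blast
qed

end

definition edges_meeting :: "('e \<Rightarrow> 'v set) \<Rightarrow> 'e \<Rightarrow> 'e set \<Rightarrow> 'e set" where
  "edges_meeting inc e N = {f \<in> N. inc f \<inter> inc e \<noteq> {}}"

lemma card_Un_meeting_sets_le: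
  fixes A :: "'v set" and B :: "'e \<Rightarrow> 'v set"
  assumes F: "finite F" "F \<noteq> {}" and A: "card A \<le> r"
    and B: "\<And>f. f \<in> F \<Longrightarrow> finite (B f) \<and> card (B f) \<le> r \<and> B f \<inter> A \<noteq> {}"
  shows "card (A \<union> \<Union> (B ` F)) \<le> (2 * r - 1) * card F"
proof -
  have "card (A \<union> \<Union> (B ` F)) = card (A \<union> (\<Union>f\<in>F. B f - A))" by (rule arg_cong[of _ _ card]) blast
  also have "\<dots> \<le> card A + card (\<Union>f\<in>F. B f - A)" by (rule card_Un_le)
  also have "card (\<Union>f\<in>F. B f - A) \<le> (\<Sum>f\<in>F. card (B f - A))" by (rule card_UN_le[OF F(1)])
  also have "\<dots> \<le> (\<Sum>f\<in>F. r - 1)"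
  proof (rule sum_mono)
    fix f assume f: "f \<in> F"
    have "card (B f \<inter> A) \<ge> 1" using B[OF f] by (simp add: Suc_le_eq card_gt_0_iff)
    then show "card (B f - A) \<le> r - 1" using B[OF f] card_Diff_subset_Int[of "B f" A] by auto
  qed
  finally have "card (A \<union> \<Union> (B ` F)) \<le> r + card F * (r - 1)" using A by simp
  also have "\<dots> \<le> (2 * r - 1) * card F"
  proof -
    have "1 \<le> card F" using F by (simp add: Suc_le_eq card_gt_0_iff)
    then have "r \<le> r * card F" by simp
    then show ?thesis by (cases r) (simp_all add: algebra_simps)
  qed
  finally show ?thesis .
qed

locale least_meeting_matching = fin_matroid Gr indep
  for Gr :: "'m set" and indep :: "'m set \<Rightarrow> bool" +
  fixes E :: "'e set" and inc :: "'e \<Rightarrow> 'v set" and \<gamma> :: "'e \<Rightarrow> 'm"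
    and N :: "'e set" and e :: 'e
  assumes finite_edges: "finite E"
    and labels: "\<gamma> ` E \<subseteq> Gr"
    and max: "max_indep_matching Gr indep E inc \<gamma> N"
    and e_in: "e \<in> E"
    and e_free: "\<gamma> e \<notin> span (\<gamma> ` N)"
    and least: "\<And>N'. indep_matching indep E inc \<gamma> N' \<Longrightarrow> span (\<gamma> ` N') = span (\<gamma> ` N) \<Longrightarrow>
                  card (edges_meeting inc e N) \<le> card (edges_meeting inc e N')"
begin

abbreviation blocking :: "'e set" where
  "blocking \<equiv> edges_meeting inc e N"

abbreviation deleted :: "'v set" where
  "deleted \<equiv> inc e \<union> \<Union> (inc ` blocking)"

abbreviation remaining :: "'e set" where
  "remaining \<equiv> edges_minus E inc deleted"

lemma N_matching: "indep_matching indep E inc \<gamma> N"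
  using max unfolding max_indep_matching_def by blast

lemma N_subset: "N \<subseteq> E"
  and N_disjoint: "\<And>x y. x \<in> N \<Longrightarrow> y \<in> N \<Longrightarrow> x \<noteq> y \<Longrightarrow> inc x \<inter> inc y = {}"
  and inj_on_N: "inj_on \<gamma> N"
  and indep_N: "indep (\<gamma> ` N)"
  using N_matching unfolding indep_matching_def by auto

lemma blocking_subset: "blocking \<subseteq> N"
  unfolding edges_meeting_def by blast

lemma finite_blocking: "finite blocking"
  using finite_subset[OF blocking_subset] finite_subset[OF N_subset finite_edges] by blast

lemma blocking_nonempty: "blocking \<noteq> {}"
proof
  assume "blocking = {}"
  then have "\<forall>f\<in>N. inc f \<inter> inc e = {}" unfolding edges_meeting_def by blast
  then have "\<gamma> e \<in> span (\<gamma> ` N)"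
    using max_indep_matching_spans_free_edge[OF max N_matching refl e_in] labels e_in by blast
  with e_free show False by blast
qed

lemma remaining_avoids_deleted: "x \<in> remaining \<Longrightarrow> inc x \<inter> deleted = {}"
  unfolding edges_minus_def by blast

lemma remaining_subset: "remaining \<subseteq> E"
  unfolding edges_minus_def by blast

lemma remainder_indep_matching: "indep_matching indep remaining inc \<gamma> (N - blocking)"
proof (rule indep_matching_subset[OF N_matching])
  show "N - blocking \<subseteq> remaining"
  proof
    fix x assume x: "x \<in> N - blocking"
    then have "inc x \<inter> inc e = {}" unfolding edges_meeting_def by blast
    moreover have "inc x \<inter> inc f = {}" if "f \<in> blocking" for f
      using x that blocking_subset N_disjoint by blast
    ultimately show "x \<in> remaining"
      using x N_subset unfolding edges_minus_def by blast
  qed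
qed blast

lemma indep_matching_swap_remainder:
  assumes N2: "indep_matching indep remaining inc \<gamma> N2"
    and span_N2: "span (\<gamma> ` N2) = span (\<gamma> ` (N - blocking))"
  shows "indep_matching indep E inc \<gamma> (N2 \<union> blocking)"
    and "span (\<gamma> ` (N2 \<union> blocking)) = span (\<gamma> ` N)"
    and "\<gamma> ` N2 \<inter> \<gamma> ` blocking = {}"
proof -
  have N2_rem: "N2 \<subseteq> remaining" and indep_N2: "indep (\<gamma> ` N2)"
    using N2 unfolding indep_matching_def by auto
  have N_split: "\<gamma> ` N = \<gamma> ` (N - blocking) \<union> \<gamma> ` blocking"
    using blocking_subset by blast
  have split_disj: "\<gamma> ` (N - blocking) \<inter> \<gamma> ` blocking = {}"
    using inj_on_image_Int[OF inj_on_N Diff_subset[of N blocking] blocking_subset]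
    by (metis Diff_disjoint Int_commute image_empty)
  have indep_rest: "indep (\<gamma> ` (N - blocking))"
    using indep_subset[OF indep_N image_mono[OF Diff_subset]] .
  have indep_split: "indep (\<gamma> ` (N - blocking) \<union> \<gamma> ` blocking)" using indep_N N_split by simp
  note exchange = indep_Un_exchange[OF indep_rest indep_N2 span_N2[symmetric] indep_split split_disj]
  show disj: "\<gamma> ` N2 \<inter> \<gamma> ` blocking = {}" by (rule exchange(2))
  show "indep_matching indep E inc \<gamma> (N2 \<union> blocking)"
  proof (rule indep_matching_Un[OF _ _ _ disj exchange(1)])
    show "indep_matching indep E inc \<gamma> N2"
      using indep_matching_subset[OF N2 subset_refl] N2_rem remaining_subset by blast
    show "indep_matching indep E inc \<gamma> blocking"
      using indep_matching_subset[OF N_matching blocking_subset] blocking_subset N_subset by blast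
    show "inc a \<inter> inc b = {}" if "a \<in> N2" "b \<in> blocking" for a b
      using that N2_rem remaining_avoids_deleted by blast
  qed
  have ground: "\<gamma> ` N2 \<subseteq> Gr" "\<gamma> ` (N - blocking) \<subseteq> Gr" "\<gamma> ` blocking \<subseteq> Gr"
    using indep_subset_ground[OF indep_N2] indep_subset_ground[OF indep_split] by auto
  show "span (\<gamma> ` (N2 \<union> blocking)) = span (\<gamma> ` N)"
    using span_Un_cong[OF ground span_N2] N_split by (simp add: image_Un)
qed

lemma remainder_not_extendable:
  assumes N2: "indep_matching indep remaining inc \<gamma> N2"
    and span_N2: "span (\<gamma> ` N2) = span (\<gamma> ` (N - blocking))"
    and augmented: "indep_matching indep remaining inc \<gamma> (insert g N2)" and g: "g \<notin> N2"
  shows False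
proof -
  define S where "S = N2 \<union> blocking"
  note S = indep_matching_swap_remainder[OF N2 span_N2, folded S_def]
  from augmented have g_rem: "g \<in> remaining" and N2_rem: "N2 \<subseteq> remaining"
    and indep_gN2: "indep (\<gamma> ` insert g N2)" and inj_gN2: "inj_on \<gamma> (insert g N2)"
    and disj_gN2: "\<forall>x\<in>insert g N2. \<forall>y\<in>insert g N2. x \<noteq> y \<longrightarrow> inc x \<inter> inc y = {}"
    unfolding indep_matching_def by auto
  have g_E: "g \<in> E" and g_ground: "\<gamma> g \<in> Gr"
    using g_rem remaining_subset labels by blast+
  have "inc f \<inter> inc g = {}" if "f \<in> S" for f
  proof (cases "f \<in> N2")
    case True
    with g have "f \<noteq> g" by blast
    with True show ?thesis using disj_gN2 by blast
  next
    case False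
    then have "inc f \<subseteq> deleted" using that unfolding S_def by blast
    then show ?thesis using remaining_avoids_deleted[OF g_rem] by blast
  qed
  then have g_span: "\<gamma> g \<in> span (\<gamma> ` S)"
    using max_indep_matching_spans_free_edge[OF max S(1,2) g_E g_ground] by blast
  have indep_S: "indep (\<gamma> ` N2 \<union> \<gamma> ` blocking)"
    using S(1) unfolding S_def indep_matching_def by (simp add: image_Un)
  have "\<gamma> g \<notin> \<gamma> ` N2" using inj_gN2 g by simp
  moreover have "finite (\<gamma> ` N2)"
    using indep_finite[OF indep_subset[OF indep_gN2 image_mono[OF subset_insertI]]] .
  ultimately have less: "card (\<gamma> ` N2) < card (\<gamma> ` insert g N2)" by simp
  have "\<gamma> ` N2 \<subseteq> span (\<gamma> ` N2 \<union> \<gamma> ` blocking)"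
    using subset_span[OF indep_subset_ground[OF indep_S]] by blast
  moreover have "\<gamma> g \<in> span (\<gamma> ` N2 \<union> \<gamma> ` blocking)"
    using g_span unfolding S_def by (simp add: image_Un)
  ultimately have spanned: "\<gamma> ` insert g N2 \<subseteq> span (\<gamma> ` N2 \<union> \<gamma> ` blocking)" by simp
  obtain C' where C': "C' \<subseteq> \<gamma> ` blocking" "\<gamma> ` insert g N2 \<inter> C' = {}"
      "indep (\<gamma> ` insert g N2 \<union> C')"
      "span (\<gamma> ` insert g N2 \<union> C') = span (\<gamma> ` N2 \<union> \<gamma> ` blocking)" "card C' < card (\<gamma> ` blocking)"
    using indep_Un_exchange_superset[OF indep_S S(3) image_mono[OF subset_insertI] indep_gN2 spanned less]
    by auto
  define F' where "F' = {f \<in> blocking. \<gamma> f \<in> C'}"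
  have F'_sub: "F' \<subseteq> blocking" unfolding F'_def by blast
  have image_F': "\<gamma> ` F' = C'" using C'(1) unfolding F'_def by blast
  have inj_blocking: "inj_on \<gamma> blocking" using inj_on_subset[OF inj_on_N blocking_subset] .
  have "card F' = card C'"
    using card_image[OF inj_on_subset[OF inj_blocking F'_sub]] image_F' by simp
  also have "\<dots> < card blocking" using C'(5) card_image[OF inj_blocking] by simp
  finally have F'_less: "card F' < card blocking" .
  define S' where "S' = insert g N2 \<union> F'"
  have "indep_matching indep E inc \<gamma> S'"
    unfolding S'_def
  proof (rule indep_matching_Un)
    show "indep_matching indep E inc \<gamma> (insert g N2)"
      using N2_rem g_rem remaining_subset by (intro indep_matching_subset[OF augmented subset_refl]) blast
    show "indep_matching indep E inc \<gamma> F'"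
      using F'_sub blocking_subset N_subset
      by (intro indep_matching_subset[OF N_matching]) blast+
    show "inc a \<inter> inc b = {}" if "a \<in> insert g N2" "b \<in> F'" for a b
    proof -
      have "inc b \<subseteq> deleted" using that(2) F'_sub by blast
      moreover have "a \<in> remaining" using that(1) g_rem N2_rem by blast
      ultimately show ?thesis using remaining_avoids_deleted by blast
    qed
    show "\<gamma> ` insert g N2 \<inter> \<gamma> ` F' = {}" using C'(2) image_F' by simp
    show "indep (\<gamma> ` insert g N2 \<union> \<gamma> ` F')" using C'(3) image_F' by simp
  qed
  moreover have "span (\<gamma> ` S') = span (\<gamma> ` N)"
    using C'(4) S(2) image_F' unfolding S'_def S_def by (simp add: image_Un)
  ultimately have "card blocking \<le> card (edges_meeting inc e S')" by (rule least)
  moreover have "edges_meeting inc e S' \<subseteq> F'"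
  proof
    fix f assume f: "f \<in> edges_meeting inc e S'"
    have "inc a \<inter> inc e = {}" if "a \<in> insert g N2" for a
      using that g_rem N2_rem remaining_avoids_deleted by blast
    with f show "f \<in> F'" unfolding S'_def edges_meeting_def by blast
  qed
  then have "card (edges_meeting inc e S') \<le> card F'"
    using card_mono[OF finite_subset[OF F'_sub finite_blocking]] by blast
  ultimately show False using F'_less by linarith
qed

lemma max_indep_matching_remainder: "max_indep_matching Gr indep remaining inc \<gamma> (N - blocking)"
proof -
  have "N3 = N2"
    if N2: "indep_matching indep remaining inc \<gamma> N2" "span (\<gamma> ` N2) = span (\<gamma> ` (N - blocking))"
      and N3: "indep_matching indep remaining inc \<gamma> N3" "N2 \<subseteq> N3" for N2 N3
  proof (rule ccontr)
    assume "N3 \<noteq> N2"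
    then obtain g where g: "g \<in> N3" "g \<notin> N2" using N3(2) by blast
    moreover have "insert g N2 \<subseteq> N3" using g N3(2) by blast
    moreover have "N3 \<subseteq> remaining" using N3(1) unfolding indep_matching_def by blast
    ultimately have "indep_matching indep remaining inc \<gamma> (insert g N2)"
      using indep_matching_subset[OF N3(1)] by blast
    with N2 g show False using remainder_not_extendable by blast
  qed
  then show ?thesis using remainder_indep_matching
    unfolding max_indep_matching_def incl_max_indep_matching_def by blast
qed

end

lemma multi_hypergraph_edges_minus:
  "multi_hypergraph V E inc \<Longrightarrow> multi_hypergraph V (edges_minus E inc U) inc"
  unfolding multi_hypergraph_def edges_minus_def by auto

lemma edges_minus_edges_minus:
  "edges_minus (edges_minus E inc U) inc U' = edges_minus E inc (U \<union> U')"
  unfolding edges_minus_def by blast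

lemma max_indep_matching_reduction:
  assumes hyp: "multi_hypergraph V E inc" and rank: "\<forall>e\<in>E. card (inc e) \<le> r"
    and mat: "matroid Gr indep" and labels: "\<gamma> ` E \<subseteq> Gr"
    and max: "max_indep_matching Gr indep E inc \<gamma> M"
    and unspanned: "\<not> \<gamma> ` E \<subseteq> mspan Gr indep (\<gamma> ` M)"
  obtains k U M' where "1 \<le> k" "k \<le> card M" "U \<subseteq> V" "card U \<le> (2 * r - 1) * k"
    "max_indep_matching Gr indep (edges_minus E inc U) inc \<gamma> M'" "card M' = card M - k"
proof -
  interpret fin_matroid Gr indep by (rule fin_matroid.intro[OF mat])
  obtain e where e: "e \<in> E" "\<gamma> e \<notin> span (\<gamma> ` M)" using unspanned by blast
  let ?P = "\<lambda>N. indep_matching indep E inc \<gamma> N \<and> span (\<gamma> ` N) = span (\<gamma> ` M)"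
  have M: "?P M" using max unfolding max_indep_matching_def by simp
  then obtain N where N: "?P N"
    and least: "\<forall>N'. ?P N' \<longrightarrow> card (edges_meeting inc e N) \<le> card (edges_meeting inc e N')"
    using ex_has_least_nat[of ?P M "\<lambda>N. card (edges_meeting inc e N)"] by blast
  have finite_edges: "finite E" using hyp unfolding multi_hypergraph_def by blast
  interpret least_meeting_matching Gr indep E inc \<gamma> N e
    using finite_edges labels max_indep_matching_if_span_eq[OF max] N e least
    by unfold_locales auto
  have card_N: "card N = card M"
    using indep_matching_card_eq[OF N_matching conjunct1[OF M]] N by simp
  show thesis
  proof
    show "1 \<le> card blocking"
      using blocking_nonempty finite_blocking by (simp add: Suc_le_eq card_gt_0_iff)
    show "card blocking \<le> card M"
      using card_mono[OF finite_subset[OF N_subset finite_edges] blocking_subset] card_N by simp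
    show "deleted \<subseteq> V"
      using hyp e_in blocking_subset N_subset unfolding multi_hypergraph_def by blast
    show "card deleted \<le> (2 * r - 1) * card blocking"
    proof (rule card_Un_meeting_sets_le[OF finite_blocking blocking_nonempty])
      show "card (inc e) \<le> r" using rank e_in by blast
      have "finite (inc f) \<and> card (inc f) \<le> r" if "f \<in> E" for f
        using that rank hyp finite_subset unfolding multi_hypergraph_def by metis
      then show "finite (inc f) \<and> card (inc f) \<le> r \<and> inc f \<inter> inc e \<noteq> {}" if "f \<in> blocking" for f
        using that blocking_subset N_subset unfolding edges_meeting_def by blast
    qed
    show "max_indep_matching Gr indep remaining inc \<gamma> (N - blocking)"
      by (rule max_indep_matching_remainder)
    show "card (N - blocking) = card M - card blocking"
      using card_Diff_subset[OF finite_blocking blocking_subset] card_N by simp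
  qed
qed

theorem mainTheorem6:
  fixes V :: "'v set" and E :: "'e set" and inc :: "'e \<Rightarrow> 'v set"
    and Gr :: "'m set" and indep :: "'m set \<Rightarrow> bool" and \<gamma> :: "'e \<Rightarrow> 'm"
    and r l :: nat and M :: "'e set"
  assumes "r \<ge> 1"
    and "multi_hypergraph V E inc"
    and "\<forall>e\<in>E. card (inc e) \<le> r"
    and "matroid Gr indep"
    and "\<gamma> ` E \<subseteq> Gr"
    and "max_indep_matching Gr indep E inc \<gamma> M"
    and "card M = l"
  shows "\<exists>a::nat. a \<le> l \<and> (\<exists>U. U \<subseteq> V \<and> card U \<le> (2 * r - 1) * a \<and>
           (\<exists>M'. indep_matching indep (edges_minus E inc U) inc \<gamma> M' \<and> card M' = l - a \<and>
              basis_of indep (mspan Gr indep (\<gamma> ` edges_minus E inc U)) (\<gamma> ` M')))"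
  using assms(2,3,5,6,7)
proof (induction l arbitrary: E M rule: less_induct)
  case (less l E M)
  interpret fin_matroid Gr indep by (rule fin_matroid.intro) fact
  have M: "indep_matching indep E inc \<gamma> M"
    using less.prems(4) unfolding max_indep_matching_def by blast
  show ?case
  proof (cases "\<gamma> ` E \<subseteq> span (\<gamma> ` M)")
    case True
    from M have "M \<subseteq> E" "indep (\<gamma> ` M)" unfolding indep_matching_def by auto
    then have "basis_of indep (span (\<gamma> ` E)) (\<gamma> ` M)"
      using basis_of_span_of_spanning[OF _ image_mono True less.prems(3)] by blast
    moreover have "edges_minus E inc {} = E" unfolding edges_minus_def by simp
    ultimately show ?thesis using M less.prems(5)
      by (intro exI[of _ 0] conjI exI[of _ "{}"] exI[of _ M]) simp_all
  next
    case False
    obtain k U M1 where k: "1 \<le> k" "k \<le> l" and U: "U \<subseteq> V" "card U \<le> (2 * r - 1) * k"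
      and M1: "max_indep_matching Gr indep (edges_minus E inc U) inc \<gamma> M1" "card M1 = l - k"
      using max_indep_matching_reduction[OF less.prems(1,2) assms(4) less.prems(3,4) False] less.prems(5)
      by metis
    have "l - k < l" "\<forall>e\<in>edges_minus E inc U. card (inc e) \<le> r" "\<gamma> ` edges_minus E inc U \<subseteq> Gr"
      using k less.prems(2,3) unfolding edges_minus_def by auto
    from less.IH[OF this(1) multi_hypergraph_edges_minus[OF less.prems(1)] this(2,3) M1]
    obtain a U' M' where a: "a \<le> l - k" and U': "U' \<subseteq> V" "card U' \<le> (2 * r - 1) * a"
      and M': "indep_matching indep (edges_minus E inc (U \<union> U')) inc \<gamma> M'" "card M' = l - k - a"
        "basis_of indep (span (\<gamma> ` edges_minus E inc (U \<union> U'))) (\<gamma> ` M')"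
      unfolding edges_minus_edges_minus by blast
    have "card (U \<union> U') \<le> (2 * r - 1) * (k + a)"
      using card_Un_le[of U U'] U(2) U'(2) by (simp add: add_mult_distrib2)
    with a k U(1) U'(1) M' show ?thesis
      by (intro exI[of _ "k + a"] conjI exI[of _ "U \<union> U'"] exI[of _ M']) auto
  qed
qed

end
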